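(* Let $\Omega=\mathbb T^2$, $\omega,\nu\in(0,1)$, $T>0$, and let $\vec u^o:\Omega\times[0,T]\to\mathbb R^2$ be a given smooth velocity field (in particular $\operatorname{div}\vec u^o\in L^1(0,T;L^\infty(\Omega))$). Let $(h_m,A_m)$ be a sufficiently regular (e.g. classical) solution on $[0,T]$ of the transport system $$\partial_t h_m+\operatorname{div}(h_m\vec u^o)=\mathcal S_{h_m,\omega,\nu},\qquad \partial_tA_m+\operatorname{div}(A_m\vec u^o)=\mathcal S_{A_m,\omega,\nu}+A_m\operatorname{div}\vec u^o\cdot\chi^\omega_{A_m},$$ with initial data $A_m(0)=A_{\rm in}$ satisfying $0\le A_{\rm in}\le1$. Then $0\le A_m(t)\le 1$ on $\Omega$ for all $t\in[0,T]$.
   Context: $\psi^+=\max\{\psi,0\}$, $\psi^-=\psi^+-\psi$. $f:\mathbb R\to\mathbb R$ is a bounded smooth function with $\underline f\le f\le\overline f$, $h_0>0$ a constant. For functions $h,A$: $$\chi^\nu_h=\frac{h^+}{h^++\nu},\qquad \mathcal S_{h,\omega,\nu}=\big[f(h^+/(A^++\omega))A+(1-A)f(0)\big]\chi^\nu_h,$$ $$\mathcal S_{A,\omega,\nu}=\frac{(f(0))^+}{h_0+\nu}(1-A)-\frac{A}{2h^++\nu}\cdot\frac{\sqrt{|\mathcal S_{h,\omega,\nu}|^2+\omega^2}-\mathcal S_{h,\omega,\nu}}{2},\qquad \chi^\omega_A=1-\frac{(1-A)^+}{(1-A)^++\omega}.$$ In the system, $\mathcal S_{h_m,\omega,\nu}$,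 $\mathcal S_{A_m,\omega,\nu}$, $\chi^\omega_{A_m}$ mean these expressions evaluated at $(h,A)=(h_m,A_m)$. *)

theory Defs
  imports "HOL-Analysis.Analysis"
begin

definition ppart :: "real \<Rightarrow> real" where
  "ppart x = max x 0"

definition chi_h :: "real \<Rightarrow> real \<Rightarrow> real" where
  "chi_h \<nu> h = ppart h / (ppart h + \<nu>)"

definition S_h :: "(real \<Rightarrow> real) \<Rightarrow> real \<Rightarrow> real \<Rightarrow> real \<Rightarrow> real \<Rightarrow> real" where
  "S_h f \<omega> \<nu> h A =
     (f (ppart h / (ppart A + \<omega>)) * A + (1 - A) * f 0) * chi_h \<nu> h"

definition S_A :: "(real \<Rightarrow> real) \<Rightarrow> real \<Rightarrow> real \<Rightarrow> real \<Rightarrow> real \<Rightarrow> real \<Rightarrow> real" where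
  "S_A f h0 \<omega> \<nu> h A =
     ppart (f 0) / (h0 + \<nu>) * (1 - A)
     - A / (2 * ppart h + \<nu>) *
       ((sqrt ((S_h f \<omega> \<nu> h A)\<^sup>2 + \<omega>\<^sup>2) - S_h f \<omega> \<nu> h A) / 2)"

definition chi_A :: "real \<Rightarrow> real \<Rightarrow> real" where
  "chi_A \<omega> A = 1 - ppart (1 - A) / (ppart (1 - A) + \<omega>)"

text \<open>Functions on the torus T^2 are represented as functions on R^2 that are
  1-periodic in both space variables.\<close>
definition periodic2 :: "(real \<Rightarrow> real \<Rightarrow> real \<Rightarrow> real) \<Rightarrow> bool" where
  "periodic2 F \<longleftrightarrow> (\<forall>x y t. F (x + 1) y t = F x y t \<and> F x (y + 1) t = F x y t)"

definition C1_slab :: "real \<Rightarrow> (real \<Rightarrow> real \<Rightarrow> real \<Rightarrow> real) \<Rightarrow> bool" where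
  "C1_slab T F \<longleftrightarrow> (\<exists>Fx Fy Ft.
     (\<forall>x y t. t \<in> {0..T} \<longrightarrow>
        ((\<lambda>s. F s y t) has_real_derivative Fx x y t) (at x) \<and>
        ((\<lambda>s. F x s t) has_real_derivative Fy x y t) (at y) \<and>
        ((\<lambda>s. F x y s) has_real_derivative Ft x y t) (at t within {0..T})) \<and>
     continuous_on (UNIV \<times> UNIV \<times> {0..T}) (\<lambda>(x, y, t). F x y t) \<and>
     continuous_on (UNIV \<times> UNIV \<times> {0..T}) (\<lambda>(x, y, t). Fx x y t) \<and>
     continuous_on (UNIV \<times> UNIV \<times> {0..T}) (\<lambda>(x, y, t). Fy x y t) \<and>
     continuous_on (UNIV \<times> UNIV \<times> {0..T}) (\<lambda>(x, y, t). Ft x y t))"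

definition dt :: "real \<Rightarrow> (real \<Rightarrow> real \<Rightarrow> real \<Rightarrow> real) \<Rightarrow> real \<Rightarrow> real \<Rightarrow> real \<Rightarrow> real" where
  "dt T F x y t = (THE D. ((\<lambda>s. F x y s) has_real_derivative D) (at t within {0..T}))"

definition div2 :: "(real \<Rightarrow> real \<Rightarrow> real \<Rightarrow> real) \<Rightarrow> (real \<Rightarrow> real \<Rightarrow> real \<Rightarrow> real)
                     \<Rightarrow> real \<Rightarrow> real \<Rightarrow> real \<Rightarrow> real" where
  "div2 P Q x y t = deriv (\<lambda>s. P s y t) x + deriv (\<lambda>s. Q x s t) y"

end

theory Submission
  imports Defs
begin

text \<open>A maximum principle. Where \<open>A < 0\<close> the source \<open>S_A\<close> is positive, and where \<open>A > 1\<close> it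
  is negative while \<open>\<chi>\<^sup>\<omega>\<^sub>A = 1\<close> cancels the compression term \<open>A div u\<close>. At a spatial extremum the
  transport terms \<open>u \<cdot> \<nabla>A\<close> vanish, so at a first exit from \<open>[0,1]\<close> the sign of \<open>\<partial>\<^sub>t A\<close>
  would be wrong. Below \<open>0\<close> the remaining term \<open>A div u (\<chi>\<^sup>\<omega>\<^sub>A - 1)\<close> is only bounded by
  \<open>K |A|\<close> with \<open>K \<ge> |div u|\<close>, which the weight \<open>e\<^sup>-\<^sup>K\<^sup>t\<close> absorbs. Periodicity makes the
  space domain compact, so the extrema exist.\<close>

lemma periodic2_shift_int:
  assumes "periodic2 F"
  shows "F (x + of_int m) (y + of_int n) t = F x y t"
proof -
  have step: "F (x + 1) y t = F x y t" "F x (y + 1) t = F x y t" for x y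
    using assms by (simp_all add: periodic2_def)
  have x: "F (x + of_int m) y t = F x y t" for x y
  proof (induction m rule: int_induct[where k = 0])
    case (step1 i) then show ?case using step(1)[of "x + of_int i"] by (simp add: add.assoc)
  next
    case (step2 i) then show ?case using step(1)[of "x + of_int i - 1"] by (simp add: algebra_simps)
  qed simp
  have y: "F x (y + of_int n) t = F x y t" for x y
  proof (induction n rule: int_induct[where k = 0])
    case (step1 i) then show ?case using step(2)[of x "y + of_int i"] by (simp add: add.assoc)
  next
    case (step2 i) then show ?case using step(2)[of x "y + of_int i - 1"] by (simp add: algebra_simps)
  qed simp
  show ?thesis using x y by simp
qed

lemma periodic2_frac:
  assumes "periodic2 F"
  shows "F (frac x) (frac y) t = F x y t"
  using periodic2_shift_int[OF assms, of "frac x" "\<lfloor>x\<rfloor>" "frac y" "\<lfloor>y\<rfloor>"]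
  by (simp add: frac_def)

lemma deriv_shift_periodic:
  assumes "\<And>s. g (s + 1) = g s"
  shows "deriv g (x + 1) = deriv (g :: real \<Rightarrow> real) x"
  unfolding deriv_def DERIV_shift assms ..

lemma periodic2_div2:
  assumes "periodic2 P" "periodic2 Q"
  shows "periodic2 (div2 P Q)"
proof -
  have "deriv (\<lambda>s. P s y t) (x + 1) = deriv (\<lambda>s. P s y t) x"
       "deriv (\<lambda>s. Q x s t) (y + 1) = deriv (\<lambda>s. Q x s t) y" for x y t
    using assms by (intro deriv_shift_periodic; simp add: periodic2_def)+
  moreover have "(\<lambda>s. Q (x + 1) s t) = (\<lambda>s. Q x s t)" "(\<lambda>s. P s (y + 1) t) = (\<lambda>s. P s y t)" for x y t
    using assms by (simp_all add: periodic2_def)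
  ultimately show ?thesis by (simp add: periodic2_def div2_def)
qed

lemma periodic2_attains_min:
  assumes "periodic2 F" "0 \<le> T"
    and "continuous_on (UNIV \<times> UNIV \<times> {0..T}) (\<lambda>(x, y, t). F x y t)"
  obtains p q s where "s \<in> {0..T}" "\<And>x y t. t \<in> {0..T} \<Longrightarrow> F p q s \<le> F x y t"
proof -
  let ?K = "{0..1::real} \<times> {0..1::real} \<times> {0..T}"
  have "compact ?K" "?K \<noteq> {}"
    using assms(2) by (auto intro: compact_Times)
  moreover have "continuous_on ?K (\<lambda>(x, y, t). F x y t)"
    using assms(3) by (rule continuous_on_subset) auto
  ultimately obtain z where z: "z \<in> ?K"
    and min: "\<forall>w \<in> ?K. (\<lambda>(x, y, t). F x y t) z \<le> (\<lambda>(x, y, t). F x y t) w"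
    by (metis continuous_attains_inf)
  obtain p q s where pqs: "z = (p, q, s)" by (cases z)
  have "F p q s \<le> F x y t" if "t \<in> {0..T}" for x y t
  proof -
    have "(frac x, frac y, t) \<in> ?K"
      using that by (auto simp: frac_lt_1 less_imp_le)
    then have "F p q s \<le> F (frac x) (frac y) t"
      using min by (auto simp: pqs)
    then show ?thesis by (simp add: periodic2_frac[OF assms(1)])
  qed
  moreover have "s \<in> {0..T}" using z pqs by simp
  ultimately show thesis using that by blast
qed

lemma periodic2_bounded:
  assumes "periodic2 F" "0 \<le> T"
    and "continuous_on (UNIV \<times> UNIV \<times> {0..T}) (\<lambda>(x, y, t). F x y t)"
  obtains K where "\<And>x y t. t \<in> {0..T} \<Longrightarrow> \<bar>F x y t\<bar> \<le> K"
proof -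
  have per: "periodic2 (\<lambda>x y t. - \<bar>F x y t\<bar>)"
    using assms(1) by (simp add: periodic2_def)
  have cont: "continuous_on (UNIV \<times> UNIV \<times> {0..T}) (\<lambda>(x, y, t). - \<bar>F x y t\<bar>)"
    using continuous_on_minus[OF continuous_on_rabs[OF assms(3)]] by (simp add: case_prod_unfold)
  obtain p q s where "\<And>x y t. t \<in> {0..T} \<Longrightarrow> - \<bar>F p q s\<bar> \<le> - \<bar>F x y t\<bar>"
    by (rule periodic2_attains_min[OF per assms(2) cont]) blast
  then show thesis using that[of "\<bar>F p q s\<bar>"] by simp
qed

lemma has_real_derivative_nonpos_at_left_min:
  assumes "0 < s" "s \<le> T"
    and "(g has_real_derivative D) (at s within {0..T})"
    and "\<And>r. r \<in> {0..s} \<Longrightarrow> g s \<le> g r"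
  shows "D \<le> 0"
proof -
  have "(g has_real_derivative D) (at s within {0..s})"
    using assms(3) by (rule has_field_derivative_subset) (use assms(2) in auto)
  then have "((\<lambda>r. (g r - g s) / (r - s)) \<longlongrightarrow> D) (at_left s)"
    using assms(1) by (simp add: at_within_Icc_at_left has_field_derivative_iff)
  moreover have "eventually (\<lambda>r. r \<in> {0<..<s}) (at_left s)"
    using assms(1) by (rule eventually_at_left_real)
  then have "eventually (\<lambda>r. (g r - g s) / (r - s) \<le> 0) (at_left s)"
    by eventually_elim (use assms(4) in \<open>auto intro!: divide_nonneg_neg\<close>)
  ultimately show ?thesis by (intro tendsto_upperbound) auto
qed

lemma first_order_conditions_at_weighted_min:
  fixes K :: real
  assumes "0 < s" "s \<le> T"
    and dx: "((\<lambda>r. B r q s) has_real_derivative Bx) (at p)"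
    and dy: "((\<lambda>r. B p r s) has_real_derivative By) (at q)"
    and dt: "((\<lambda>r. B p q r) has_real_derivative Bt) (at s within {0..T})"
    and min: "\<And>x y r. r \<in> {0..s} \<Longrightarrow> exp (- K * s) * B p q s \<le> exp (- K * r) * B x y r"
  shows "Bx = 0" "By = 0" "Bt \<le> K * B p q s"
proof -
  have space_min: "B p q s \<le> B x y s" for x y
    using min[of s x y] assms(1) by simp
  show "Bx = 0"
    by (rule DERIV_local_min[OF dx, of 1]) (use space_min in auto)
  show "By = 0"
    by (rule DERIV_local_min[OF dy, of 1]) (use space_min in auto)
  have "((\<lambda>r. exp (- K * r) * B p q r) has_real_derivative exp (- K * s) * (Bt - K * B p q s))
          (at s within {0..T})"
    using dt by (auto intro!: derivative_eq_intros simp: algebra_simps)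
  then have "exp (- K * s) * (Bt - K * B p q s) \<le> 0"
    by (rule has_real_derivative_nonpos_at_left_min[OF assms(1,2)]) (use min in auto)
  then show "Bt \<le> K * B p q s"
    by (simp add: mult_le_0_iff)
qed

lemma periodic2_nonneg_principle:
  fixes K :: real
  assumes per: "periodic2 B"
    and cont: "continuous_on (UNIV \<times> UNIV \<times> {0..T}) (\<lambda>(x, y, t). B x y t)"
    and dx: "\<And>x y t. t \<in> {0..T} \<Longrightarrow> ((\<lambda>s. B s y t) has_real_derivative Bx x y t) (at x)"
    and dy: "\<And>x y t. t \<in> {0..T} \<Longrightarrow> ((\<lambda>s. B x s t) has_real_derivative By x y t) (at y)"
    and dt: "\<And>x y t. t \<in> {0..T} \<Longrightarrow> ((\<lambda>s. B x y s) has_real_derivative Bt x y t) (at t within {0..T})"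
    and init: "\<And>x y. 0 \<le> B x y 0"
    and crit: "\<And>x y t. \<lbrakk>t \<in> {0..T}; B x y t < 0; Bx x y t = 0; By x y t = 0\<rbrakk>
                 \<Longrightarrow> K * B x y t < Bt x y t"
    and t1: "t1 \<in> {0..T}"
  shows "0 \<le> B x1 y1 t1"
proof (rule ccontr)
  assume neg: "\<not> 0 \<le> B x1 y1 t1"
  define E where "E x y t = exp (- K * t) * B x y t" for x y t
  have "periodic2 E"
    using per by (simp add: periodic2_def E_def)
  moreover have "continuous_on (UNIV \<times> UNIV \<times> {0..t1}) (\<lambda>(x, y, t). B x y t)"
    using cont by (rule continuous_on_subset) (use t1 in auto)
  then have "continuous_on (UNIV \<times> UNIV \<times> {0..t1}) (\<lambda>(x, y, t). E x y t)"
    unfolding E_def by (auto intro!: continuous_intros simp: case_prod_unfold)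
  ultimately obtain p q s where s: "s \<in> {0..t1}"
    and min: "\<And>x y t. t \<in> {0..t1} \<Longrightarrow> E p q s \<le> E x y t"
    using periodic2_attains_min t1 by (metis atLeastAtMost_iff)
  have sT: "s \<in> {0..T}" using s t1 by auto
  have "E p q s < 0"
    using min[of t1 x1 y1] neg t1 by (simp add: E_def mult_pos_neg order.strict_trans1)
  then have Bneg: "B p q s < 0"
    by (simp add: E_def mult_less_0_iff)
  then have "0 < s"
    using s init[of p q] by (cases "s = 0") auto
  moreover have "exp (- K * s) * B p q s \<le> exp (- K * r) * B x y r" if "r \<in> {0..s}" for x y r
    using min[of r x y] that s by (simp add: E_def)
  ultimately have "Bx p q s = 0" "By p q s = 0" "Bt p q s \<le> K * B p q s"
    using first_order_conditions_at_weighted_min[where K = K, OF _ _ dx[OF sT] dy[OF sT] dt[OF sT]] sT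
    by auto
  then show False
    using crit[OF sT Bneg] by linarith
qed

lemma periodic2_le_principle:
  fixes K c :: real
  assumes per: "periodic2 B"
    and cont: "continuous_on (UNIV \<times> UNIV \<times> {0..T}) (\<lambda>(x, y, t). B x y t)"
    and dx: "\<And>x y t. t \<in> {0..T} \<Longrightarrow> ((\<lambda>s. B s y t) has_real_derivative Bx x y t) (at x)"
    and dy: "\<And>x y t. t \<in> {0..T} \<Longrightarrow> ((\<lambda>s. B x s t) has_real_derivative By x y t) (at y)"
    and dt: "\<And>x y t. t \<in> {0..T} \<Longrightarrow> ((\<lambda>s. B x y s) has_real_derivative Bt x y t) (at t within {0..T})"
    and init: "\<And>x y. B x y 0 \<le> c"
    and crit: "\<And>x y t. \<lbrakk>t \<in> {0..T}; c < B x y t; Bx x y t = 0; By x y t = 0\<rbrakk>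
                 \<Longrightarrow> Bt x y t < K * (B x y t - c)"
    and t1: "t1 \<in> {0..T}"
  shows "B x1 y1 t1 \<le> c"
proof -
  have "0 \<le> c - B x1 y1 t1"
  proof (rule periodic2_nonneg_principle[where B = "\<lambda>x y t. c - B x y t" and K = K
      and Bx = "\<lambda>x y t. - Bx x y t" and By = "\<lambda>x y t. - By x y t" and Bt = "\<lambda>x y t. - Bt x y t",
      OF _ _ _ _ _ _ _ t1])
    show "periodic2 (\<lambda>x y t. c - B x y t)"
      using per by (simp add: periodic2_def)
    show "continuous_on (UNIV \<times> UNIV \<times> {0..T}) (\<lambda>(x, y, t). c - B x y t)"
      using cont by (auto intro!: continuous_intros simp: case_prod_unfold)
    show "((\<lambda>s. c - B s y t) has_real_derivative - Bx x y t) (at x)"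
         "((\<lambda>s. c - B x s t) has_real_derivative - By x y t) (at y)"
         "((\<lambda>s. c - B x y s) has_real_derivative - Bt x y t) (at t within {0..T})"
      if "t \<in> {0..T}" for x y t
      using dx[OF that] dy[OF that] dt[OF that] by (auto intro!: derivative_eq_intros)
    show "0 \<le> c - B x y 0" for x y
      using init[of x y] by simp
    show "K * (c - B x y t) < - Bt x y t"
      if "t \<in> {0..T}" "c - B x y t < 0" "- Bx x y t = 0" "- By x y t = 0" for x y t
      using crit[of t x y] that by (simp add: algebra_simps)
  qed
  then show ?thesis by simp
qed

lemma C1_slabE:
  assumes "C1_slab T F"
  obtains Fx Fy Ft where
    "\<And>x y t. t \<in> {0..T} \<Longrightarrow> ((\<lambda>s. F s y t) has_real_derivative Fx x y t) (at x)"
    "\<And>x y t. t \<in> {0..T} \<Longrightarrow> ((\<lambda>s. F x s t) has_real_derivative Fy x y t) (at y)"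
    "\<And>x y t. t \<in> {0..T} \<Longrightarrow> ((\<lambda>s. F x y s) has_real_derivative Ft x y t) (at t within {0..T})"
    "continuous_on (UNIV \<times> UNIV \<times> {0..T}) (\<lambda>(x, y, t). F x y t)"
    "continuous_on (UNIV \<times> UNIV \<times> {0..T}) (\<lambda>(x, y, t). Fx x y t)"
    "continuous_on (UNIV \<times> UNIV \<times> {0..T}) (\<lambda>(x, y, t). Fy x y t)"
  using assms unfolding C1_slab_def by blast

lemma dt_eqI:
  assumes "0 < T" "t \<in> {0..T}"
    and "((\<lambda>s. F x y s) has_real_derivative D) (at t within {0..T})"
  shows "dt T F x y t = D"
proof -
  have "at t within {0..T} \<noteq> bot"
    using assms(1,2) by (simp add: trivial_limit_within)
  then show ?thesis
    unfolding dt_def using assms(3) has_field_derivative_unique by blast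
qed

lemma div2_eqI:
  assumes "((\<lambda>s. P s y t) has_real_derivative Px) (at x)"
    and "((\<lambda>s. Q x s t) has_real_derivative Qy) (at y)"
  shows "div2 P Q x y t = Px + Qy"
  using assms by (simp add: div2_def DERIV_imp_deriv)

lemma dt_add_div2_mult:
  assumes "0 < T" "t \<in> {0..T}"
    and "((\<lambda>s. A s y t) has_real_derivative Ax) (at x)"
    and "((\<lambda>s. A x s t) has_real_derivative Ay) (at y)"
    and "((\<lambda>s. A x y s) has_real_derivative At) (at t within {0..T})"
    and "((\<lambda>s. u s y t) has_real_derivative Ux) (at x)"
    and "((\<lambda>s. v x s t) has_real_derivative Vy) (at y)"
  shows "dt T A x y t + div2 (\<lambda>x y t. A x y t * u x y t) (\<lambda>x y t. A x y t * v x y t) x y t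
           = At + Ax * u x y t + Ay * v x y t + A x y t * div2 u v x y t"
proof -
  have "div2 (\<lambda>x y t. A x y t * u x y t) (\<lambda>x y t. A x y t * v x y t) x y t
          = (Ax * u x y t + Ux * A x y t) + (Ay * v x y t + Vy * A x y t)"
    using DERIV_mult[OF assms(3,6)] DERIV_mult[OF assms(4,7)] by (intro div2_eqI)
  moreover have "div2 u v x y t = Ux + Vy"
    using assms(6,7) by (rule div2_eqI)
  ultimately show ?thesis
    using dt_eqI[where F = A, OF assms(1,2,5)] by (simp add: algebra_simps)
qed

lemma C1_slab_div2_continuous:
  assumes "C1_slab T u" "C1_slab T v"
  shows "continuous_on (UNIV \<times> UNIV \<times> {0..T}) (\<lambda>(x, y, t). div2 u v x y t)"
proof -
  obtain Ux where Ux: "\<And>x y t. t \<in> {0..T} \<Longrightarrow> ((\<lambda>s. u s y t) has_real_derivative Ux x y t) (at x)"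
    and Ux_cont: "continuous_on (UNIV \<times> UNIV \<times> {0..T}) (\<lambda>(x, y, t). Ux x y t)"
    using assms(1) by (rule C1_slabE) blast
  obtain Vy where Vy: "\<And>x y t. t \<in> {0..T} \<Longrightarrow> ((\<lambda>s. v x s t) has_real_derivative Vy x y t) (at y)"
    and Vy_cont: "continuous_on (UNIV \<times> UNIV \<times> {0..T}) (\<lambda>(x, y, t). Vy x y t)"
    using assms(2) by (rule C1_slabE) blast
  show ?thesis
    using continuous_on_add[OF Ux_cont Vy_cont]
    by (rule continuous_on_eq) (auto simp: div2_eqI[OF Ux Vy])
qed

lemma C1_slab_transport_form:
  assumes "0 < T" "C1_slab T A" "C1_slab T u" "C1_slab T v"
  obtains Ax Ay At where
    "\<And>x y t. t \<in> {0..T} \<Longrightarrow> ((\<lambda>s. A s y t) has_real_derivative Ax x y t) (at x)"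
    "\<And>x y t. t \<in> {0..T} \<Longrightarrow> ((\<lambda>s. A x s t) has_real_derivative Ay x y t) (at y)"
    "\<And>x y t. t \<in> {0..T} \<Longrightarrow> ((\<lambda>s. A x y s) has_real_derivative At x y t) (at t within {0..T})"
    "continuous_on (UNIV \<times> UNIV \<times> {0..T}) (\<lambda>(x, y, t). A x y t)"
    "\<And>x y t. t \<in> {0..T} \<Longrightarrow>
       dt T A x y t + div2 (\<lambda>x y t. A x y t * u x y t) (\<lambda>x y t. A x y t * v x y t) x y t
         = At x y t + Ax x y t * u x y t + Ay x y t * v x y t + A x y t * div2 u v x y t"
proof -
  obtain Ax Ay At where
    Ax: "\<And>x y t. t \<in> {0..T} \<Longrightarrow> ((\<lambda>s. A s y t) has_real_derivative Ax x y t) (at x)" and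
    Ay: "\<And>x y t. t \<in> {0..T} \<Longrightarrow> ((\<lambda>s. A x s t) has_real_derivative Ay x y t) (at y)" and
    At: "\<And>x y t. t \<in> {0..T} \<Longrightarrow> ((\<lambda>s. A x y s) has_real_derivative At x y t) (at t within {0..T})" and
    A_cont: "continuous_on (UNIV \<times> UNIV \<times> {0..T}) (\<lambda>(x, y, t). A x y t)"
    using assms(2) by (rule C1_slabE) blast
  obtain Ux where Ux: "\<And>x y t. t \<in> {0..T} \<Longrightarrow> ((\<lambda>s. u s y t) has_real_derivative Ux x y t) (at x)"
    using assms(3) by (rule C1_slabE) blast
  obtain Vy where Vy: "\<And>x y t. t \<in> {0..T} \<Longrightarrow> ((\<lambda>s. v x s t) has_real_derivative Vy x y t) (at y)"
    using assms(4) by (rule C1_slabE) blast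
  have "dt T A x y t + div2 (\<lambda>x y t. A x y t * u x y t) (\<lambda>x y t. A x y t * v x y t) x y t
      = At x y t + Ax x y t * u x y t + Ay x y t * v x y t + A x y t * div2 u v x y t"
    if "t \<in> {0..T}" for x y t
    using dt_add_div2_mult[where A = A and u = u and v = v and x = x and y = y,
        OF assms(1) that Ax[OF that] Ay[OF that] At[OF that] Ux[OF that] Vy[OF that]] .
  with Ax Ay At A_cont show thesis by (rule that)
qed

lemma less_sqrt_square_add_square: "(w::real) \<noteq> 0 \<Longrightarrow> x < sqrt (x\<^sup>2 + w\<^sup>2)"
proof -
  assume "w \<noteq> 0"
  then have "sqrt (x\<^sup>2) < sqrt (x\<^sup>2 + w\<^sup>2)"
    by (intro real_sqrt_less_mono) simp
  moreover have "x \<le> sqrt (x\<^sup>2)" by simp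
  ultimately show ?thesis by linarith
qed

lemma S_A_neg:
  assumes "1 < a" "0 < \<omega>" "0 < \<nu>" "0 < h0"
  shows "S_A f h0 \<omega> \<nu> h a < 0"
proof -
  let ?S = "S_h f \<omega> \<nu> h a"
  have "0 < a / (2 * ppart h + \<nu>) * ((sqrt (?S\<^sup>2 + \<omega>\<^sup>2) - ?S) / 2)"
    using assms less_sqrt_square_add_square[of \<omega> ?S] by (simp add: ppart_def)
  moreover have "ppart (f 0) / (h0 + \<nu>) * (1 - a) \<le> 0"
    using assms by (intro mult_nonneg_nonpos) (auto simp: ppart_def)
  ultimately show ?thesis unfolding S_A_def by linarith
qed

lemma S_A_pos:
  assumes "a < 0" "0 < \<omega>" "0 < \<nu>" "0 < h0"
  shows "0 < S_A f h0 \<omega> \<nu> h a"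
proof -
  let ?S = "S_h f \<omega> \<nu> h a"
  have "a / (2 * ppart h + \<nu>) < 0"
    using assms by (simp add: ppart_def divide_neg_pos)
  moreover have "0 < (sqrt (?S\<^sup>2 + \<omega>\<^sup>2) - ?S) / 2"
    using assms less_sqrt_square_add_square[of \<omega> ?S] by simp
  ultimately have "a / (2 * ppart h + \<nu>) * ((sqrt (?S\<^sup>2 + \<omega>\<^sup>2) - ?S) / 2) < 0"
    by (rule mult_neg_pos)
  moreover have "0 \<le> ppart (f 0) / (h0 + \<nu>) * (1 - a)"
    using assms by (intro mult_nonneg_nonneg) (auto simp: ppart_def)
  ultimately show ?thesis unfolding S_A_def by linarith
qed

lemma chi_A_eq_1: "1 \<le> a \<Longrightarrow> chi_A \<omega> a = 1"
  by (simp add: chi_A_def ppart_def)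

lemma chi_A_sub_1_bound:
  assumes "a < 0" "\<bar>d\<bar> \<le> K" "0 < \<omega>"
  shows "K * a \<le> a * d * (chi_A \<omega> a - 1)"
proof -
  define r where "r = (1 - a) / (1 - a + \<omega>)"
  have r: "0 \<le> r" "r \<le> 1"
    using assms unfolding r_def by auto
  have "K * a = (- a) * (- K)" by simp
  also have "\<dots> \<le> (- a) * (d * r)"
  proof (rule mult_left_mono)
    have "\<bar>d * r\<bar> \<le> \<bar>d\<bar>"
      using r by (simp add: abs_mult mult_left_le)
    then show "- K \<le> d * r"
      using assms(2) by linarith
  qed (use assms(1) in simp)
  also have "\<dots> = a * d * (chi_A \<omega> a - 1)"
    using assms by (simp add: chi_A_def ppart_def r_def)
  finally show ?thesis .
qed

theorem mainTheorem2:
  fixes f :: "real \<Rightarrow> real" and h0 \<omega> \<nu> T :: real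
    and u1 u2 h A :: "real \<Rightarrow> real \<Rightarrow> real \<Rightarrow> real"
    and A_in :: "real \<Rightarrow> real \<Rightarrow> real"
  assumes f_bdd: "bounded (range f)"
    and f_smooth: "\<forall>z. f differentiable (at z)"
    and h0_pos: "h0 > 0"
    and \<omega>: "0 < \<omega>" "\<omega> < 1"
    and \<nu>: "0 < \<nu>" "\<nu> < 1"
    and T_pos: "T > 0"
    and u_per: "periodic2 u1" "periodic2 u2"
    and u_reg: "C1_slab T u1" "C1_slab T u2"
    and sol_per: "periodic2 h" "periodic2 A"
    and sol_reg: "C1_slab T h" "C1_slab T A"
    and eq_h: "\<forall>x y t. t \<in> {0..T} \<longrightarrow>
        dt T h x y t + div2 (\<lambda>x y t. h x y t * u1 x y t) (\<lambda>x y t. h x y t * u2 x y t) x y t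
          = S_h f \<omega> \<nu> (h x y t) (A x y t)"
    and eq_A: "\<forall>x y t. t \<in> {0..T} \<longrightarrow>
        dt T A x y t + div2 (\<lambda>x y t. A x y t * u1 x y t) (\<lambda>x y t. A x y t * u2 x y t) x y t
          = S_A f h0 \<omega> \<nu> (h x y t) (A x y t)
            + A x y t * div2 u1 u2 x y t * chi_A \<omega> (A x y t)"
    and init: "\<forall>x y. A x y 0 = A_in x y"
    and A_in_bounds: "\<forall>x y. 0 \<le> A_in x y \<and> A_in x y \<le> 1"
  shows "\<forall>x y t. t \<in> {0..T} \<longrightarrow> 0 \<le> A x y t \<and> A x y t \<le> 1"
proof -
  obtain Ax Ay At where
    Ax: "\<And>x y t. t \<in> {0..T} \<Longrightarrow> ((\<lambda>s. A s y t) has_real_derivative Ax x y t) (at x)" and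
    Ay: "\<And>x y t. t \<in> {0..T} \<Longrightarrow> ((\<lambda>s. A x s t) has_real_derivative Ay x y t) (at y)" and
    At: "\<And>x y t. t \<in> {0..T} \<Longrightarrow> ((\<lambda>s. A x y s) has_real_derivative At x y t) (at t within {0..T})" and
    A_cont: "continuous_on (UNIV \<times> UNIV \<times> {0..T}) (\<lambda>(x, y, t). A x y t)" and
    transport: "\<And>x y t. t \<in> {0..T} \<Longrightarrow>
       dt T A x y t + div2 (\<lambda>x y t. A x y t * u1 x y t) (\<lambda>x y t. A x y t * u2 x y t) x y t
         = At x y t + Ax x y t * u1 x y t + Ay x y t * u2 x y t + A x y t * div2 u1 u2 x y t"
    using C1_slab_transport_form[OF T_pos sol_reg(2) u_reg] by blast
  obtain K where K: "\<And>x y t. t \<in> {0..T} \<Longrightarrow> \<bar>div2 u1 u2 x y t\<bar> \<le> K"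
    using periodic2_bounded[OF periodic2_div2[OF u_per] _ C1_slab_div2_continuous[OF u_reg]] T_pos
    by (meson less_imp_le)
  have critical: "At x y t = S_A f h0 \<omega> \<nu> (h x y t) (A x y t)
      + A x y t * div2 u1 u2 x y t * (chi_A \<omega> (A x y t) - 1)"
    if "t \<in> {0..T}" "Ax x y t = 0" "Ay x y t = 0" for x y t
    using eq_A transport[OF that(1), of x y] that unfolding right_diff_distrib mult_1_right by fastforce
  have "0 \<le> A x y t" if "t \<in> {0..T}" for x y t
  proof (rule periodic2_nonneg_principle[OF sol_per(2) A_cont Ax Ay At _ _ that])
    show "0 \<le> A x y 0" for x y
      using init A_in_bounds by simp
    show "K * A x y t < At x y t" if "t \<in> {0..T}" "A x y t < 0" "Ax x y t = 0" "Ay x y t = 0" for x y t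
      using critical[OF that(1,3,4)] S_A_pos[where f = f and h = "h x y t", OF that(2) \<omega>(1) \<nu>(1) h0_pos]
        chi_A_sub_1_bound[OF that(2) K[of t x y, OF that(1)] \<omega>(1)] by linarith
  qed
  moreover have "A x y t \<le> 1" if "t \<in> {0..T}" for x y t
  proof (rule periodic2_le_principle[where K = 0, OF sol_per(2) A_cont Ax Ay At _ _ that])
    show "A x y 0 \<le> 1" for x y
      using init A_in_bounds by simp
    show "At x y t < 0 * (A x y t - 1)" if "t \<in> {0..T}" "1 < A x y t" "Ax x y t = 0" "Ay x y t = 0" for x y t
      using critical[OF that(1,3,4)] chi_A_eq_1[of "A x y t" \<omega>]
        S_A_neg[where f = f and h = "h x y t", OF that(2) \<omega>(1) \<nu>(1) h0_pos] that(2) by simp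
  qed
  ultimately show ?thesis by simp
qed

end
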